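(* Let $M(C,\bar\xi,\pi)$ be a Myller configuration whose versor field has Frenet-type frame $(\bar\xi_1,\bar\xi_2,\bar\xi_3)$ with curvature $K_1>0$. Then $C$ is a $\bar\xi_1$-helix with respect to the Frenet-type frame if and only if $C$ is a $W_n$-helix in $M$.
   Context: Let $C$ be a smooth curve in $E^3$ parametrized by arclength $s$; primes denote $d/ds$. A Myller configuration $M(C,\bar\xi,\pi)$ consists of a smooth unit vector field $\bar\xi$ along $C$ and a smooth oriented plane field $\pi$ with $\bar\xi\in\pi$; $\bar v$ is the unit normal of $\pi$, $\bar\mu=\bar v\times\bar\xi$, and $\bar\xi'=G\bar\mu+K\bar v$, $\bar\mu'=-G\bar\xi+T\bar v$, $\bar v'=-K\bar\xi-T\bar\mu$. Frenet-type frame: $\bar\xi_1=\bar\xi$, $K_1=\|\bar\xi'\|$, $\bar\xi_2=\bar\xi_1'/K_1$, $\bar\xi_3=\bar\xi_1\times\bar\xi_2$. $C$ is a $\bar\xi_1$-helix if $\langle\bar\xi_1,\bar d\rangle$ is constant for some constant unit vector $\bar d$. The ND-vector is $W_n=-K\bar\mu+G\bar v$, $\bar W_n=W_n/\|W_n\|$ ($\|W_n\|=\sqrt{G^2+K^2}=K_1$), and $C$ is a $W_n$-helix if $\langle\bar W_n,\bar l_n\rangle$ is constant for some constant unit vector $\bar l_n$. *)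

theory Defs
  imports "HOL-Analysis.Analysis"
begin

definition smooth_on :: "real set \<Rightarrow> (real \<Rightarrow> real^3) \<Rightarrow> bool" where
  "smooth_on I f \<longleftrightarrow> (\<exists>D :: nat \<Rightarrow> real \<Rightarrow> real^3.
      (\<forall>s\<in>I. D 0 s = f s) \<and>
      (\<forall>n. \<forall>s\<in>I. (D n has_vector_derivative D (Suc n) s) (at s)))"

text \<open>Myller configuration M(C, xi, pi) on the open parameter interval I.
  r parametrizes C by arclength, xi is the unit versor field, the oriented plane
  field pi is given by its unit normal v (xi in pi means xi orthogonal to v),
  mu = v \<times> xi, and G, K, T are the invariants in the derivative formulas.\<close>
definition myller_mu :: "(real \<Rightarrow> real^3) \<Rightarrow> (real \<Rightarrow> real^3) \<Rightarrow> real \<Rightarrow> real^3" where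
  "myller_mu xi v s = cross3 (v s) (xi s)"

definition myller_configuration ::
  "real set \<Rightarrow> (real \<Rightarrow> real^3) \<Rightarrow> (real \<Rightarrow> real^3) \<Rightarrow> (real \<Rightarrow> real^3)
    \<Rightarrow> (real \<Rightarrow> real) \<Rightarrow> (real \<Rightarrow> real) \<Rightarrow> (real \<Rightarrow> real) \<Rightarrow> bool" where
  "myller_configuration I r xi v G K T \<longleftrightarrow>
     is_interval I \<and> open I \<and> I \<noteq> {} \<and>
     smooth_on I r \<and> smooth_on I xi \<and> smooth_on I v \<and>
     (\<forall>s\<in>I. norm (vector_derivative r (at s)) = 1) \<and>
     (\<forall>s\<in>I. norm (xi s) = 1 \<and> norm (v s) = 1 \<and> xi s \<bullet> v s = 0) \<and>
     (\<forall>s\<in>I. (xi has_vector_derivative (G s *\<^sub>R myller_mu xi v s + K s *\<^sub>R v s)) (at s)) \<and>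
     (\<forall>s\<in>I. (myller_mu xi v has_vector_derivative (- G s *\<^sub>R xi s + T s *\<^sub>R v s)) (at s)) \<and>
     (\<forall>s\<in>I. (v has_vector_derivative (- K s *\<^sub>R xi s - T s *\<^sub>R myller_mu xi v s)) (at s))"

definition frenet_xi1 :: "(real \<Rightarrow> real^3) \<Rightarrow> real \<Rightarrow> real^3" where
  "frenet_xi1 xi s = xi s"

definition frenet_K1 :: "(real \<Rightarrow> real^3) \<Rightarrow> real \<Rightarrow> real" where
  "frenet_K1 xi s = norm (vector_derivative xi (at s))"

definition frenet_xi2 :: "(real \<Rightarrow> real^3) \<Rightarrow> real \<Rightarrow> real^3" where
  "frenet_xi2 xi s = (1 / frenet_K1 xi s) *\<^sub>R vector_derivative (frenet_xi1 xi) (at s)"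

definition frenet_xi3 :: "(real \<Rightarrow> real^3) \<Rightarrow> real \<Rightarrow> real^3" where
  "frenet_xi3 xi s = cross3 (frenet_xi1 xi s) (frenet_xi2 xi s)"

definition xi1_helix :: "real set \<Rightarrow> (real \<Rightarrow> real^3) \<Rightarrow> bool" where
  "xi1_helix I xi \<longleftrightarrow>
     (\<exists>d :: real^3. norm d = 1 \<and> (\<exists>c. \<forall>s\<in>I. frenet_xi1 xi s \<bullet> d = c))"

definition W_n :: "(real \<Rightarrow> real^3) \<Rightarrow> (real \<Rightarrow> real^3) \<Rightarrow> (real \<Rightarrow> real) \<Rightarrow> (real \<Rightarrow> real)
    \<Rightarrow> real \<Rightarrow> real^3" where
  "W_n xi v G K s = - K s *\<^sub>R myller_mu xi v s + G s *\<^sub>R v s"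

definition W_n_unit :: "(real \<Rightarrow> real^3) \<Rightarrow> (real \<Rightarrow> real^3) \<Rightarrow> (real \<Rightarrow> real) \<Rightarrow> (real \<Rightarrow> real)
    \<Rightarrow> real \<Rightarrow> real^3" where
  "W_n_unit xi v G K s = (1 / norm (W_n xi v G K s)) *\<^sub>R W_n xi v G K s"

definition Wn_helix :: "real set \<Rightarrow> (real \<Rightarrow> real^3) \<Rightarrow> (real \<Rightarrow> real^3)
    \<Rightarrow> (real \<Rightarrow> real) \<Rightarrow> (real \<Rightarrow> real) \<Rightarrow> bool" where
  "Wn_helix I xi v G K \<longleftrightarrow>
     (\<exists>l :: real^3. norm l = 1 \<and> (\<exists>c. \<forall>s\<in>I. W_n_unit xi v G K s \<bullet> l = c))"

end

theory Submission
  imports Defs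
begin

(* The versor field \<xi> = \<xi>1 is a curve on the unit sphere, and since W_n = \<xi> \<times> \<xi>' with
   |\<xi>'| = K1, the unit ND-vector is the binormal \<xi>3 of the Frenet-type frame, whose derivative
   is -K2 \<xi>2. If <\<xi>1, d> is constant then <\<xi>2, d> = 0, so <\<xi>3, d> is constant.
   Conversely, if <\<xi>3, l> = c then K2 <\<xi>2, l> = 0. When K2 vanishes identically, \<xi>3 is itself
   a constant direction orthogonal to \<xi>1. Otherwise, on the open set where K2 \<noteq> 0 both
   <\<xi>2, l> and its derivative vanish, which gives K2 c = K1 <\<xi>1, l> and <\<xi>1, l>^2 = 1 - c^2 \<noteq> 0;
   these closed conditions force K2 \<noteq> 0 in turn, so by connectedness K2 never vanishes,
   <\<xi>2, l> = 0 on all of I, and <\<xi>1, l> is constant. *)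

lemma has_real_derivative_norm:
  fixes b :: "real \<Rightarrow> 'a::real_inner"
  assumes "(b has_vector_derivative b') (at s)" "b s \<noteq> 0"
  shows "((\<lambda>t. norm (b t)) has_real_derivative (b s \<bullet> b') / norm (b s)) (at s)"
proof -
  have "((\<lambda>t. norm (b t)) has_derivative (\<lambda>h. h *\<^sub>R b' \<bullet> sgn (b s))) (at s)"
    using has_derivative_compose[OF assms(1)[unfolded has_vector_derivative_def]
        has_derivative_norm[OF assms(2)]] .
  then show ?thesis
    unfolding has_field_derivative_def
    by (rule has_derivative_eq_rhs) (simp add: fun_eq_iff sgn_div_norm inner_commute divide_inverse mult_ac)
qed

lemma has_field_derivative_inner:
  fixes f g :: "real \<Rightarrow> 'a::real_inner"
  assumes "(f has_vector_derivative f') (at x)" "(g has_vector_derivative g') (at x)"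
  shows "((\<lambda>s. f s \<bullet> g s) has_field_derivative (f x \<bullet> g' + f' \<bullet> g x)) (at x)"
  using bounded_bilinear.has_vector_derivative[OF bounded_bilinear_inner assms]
  by (simp add: has_real_derivative_iff_has_vector_derivative)

lemma has_field_derivative_inner_const:
  fixes f :: "real \<Rightarrow> 'a::real_inner"
  assumes "(f has_vector_derivative f') (at x)"
  shows "((\<lambda>s. f s \<bullet> l) has_field_derivative (f' \<bullet> l)) (at x)"
  using has_field_derivative_inner[OF assms has_vector_derivative_const] by simp

lemma has_vector_derivative_cross3:
  fixes f g :: "real \<Rightarrow> real^3"
  assumes "(f has_vector_derivative f') (at x)" "(g has_vector_derivative g') (at x)"
  shows "((\<lambda>s. cross3 (f s) (g s)) has_vector_derivative (cross3 (f x) g' + cross3 f' (g x))) (at x)"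
  using bounded_bilinear.has_vector_derivative[OF bilinear_cross[THEN bilinear_conv_bounded_bilinear[THEN iffD1]] assms]
  by simp

lemma has_field_derivative_const_on_open_eq_0:
  assumes "(g has_field_derivative g') (at x)" "open S" "x \<in> S" "\<And>u. u \<in> S \<Longrightarrow> g u = c"
  shows "g' = 0"
proof -
  have "((\<lambda>_. c) has_field_derivative g') (at x)"
    using assms by (rule has_field_derivative_transform_within_open)
  then show ?thesis
    using DERIV_const DERIV_unique by blast
qed

lemma orthonormal_frame_decomposition:
  fixes a b w :: "real^3"
  assumes "a \<bullet> a = 1" "a \<bullet> b = 0"
  shows "(b \<bullet> b) *\<^sub>R w = ((w \<bullet> a) * (b \<bullet> b)) *\<^sub>R a + (w \<bullet> b) *\<^sub>R b + (w \<bullet> cross3 a b) *\<^sub>R cross3 a b"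
  using assms unfolding cross3_def inner_vec_def sum_3 vec_eq_iff forall_3 vector_def
  by simp algebra

lemma cross3_cross3_same:
  fixes a b :: "real^3"
  shows "cross3 a (cross3 a b) = (a \<bullet> b) *\<^sub>R a - (a \<bullet> a) *\<^sub>R b"
  unfolding cross3_def inner_vec_def sum_3 vec_eq_iff forall_3 vector_def
  by (simp add: algebra_simps)

lemma cross3_orthonormal_frame_identity:
  fixes a b c :: "real^3"
  assumes "a \<bullet> a = 1" "a \<bullet> b = 0"
  shows "(b \<bullet> b) *\<^sub>R cross3 a c - (b \<bullet> c) *\<^sub>R cross3 a b = - (cross3 a b \<bullet> c) *\<^sub>R b"
proof -
  have "cross3 a (cross3 a b) = - b"
    using assms cross3_cross3_same[of a b] by simp
  then show ?thesis
    using arg_cong[OF orthonormal_frame_decomposition[OF assms, of c], of "cross3 a"]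
    by (simp add: cross_add_right cross_mult_right inner_commute)
qed

lemma norm_cross3_unit_orthogonal:
  fixes a b :: "real^3"
  assumes "norm a = 1" "a \<bullet> b = 0"
  shows "norm (cross3 a b) = norm b"
  using norm_cross_dot[of a b] assms by (simp add: power2_eq_iff_nonneg)

(* a plays the role of \<xi>1, so that K1 = |a'| and \<xi>2 = a' / |a'|; binormal and torsion below
   are \<xi>3 and K2. *)
locale regular_spherical_curve =
  fixes I :: "real set" and a a' a'' :: "real \<Rightarrow> real^3"
  assumes open_I: "open I" and interval_I: "is_interval I" and nonempty_I: "I \<noteq> {}"
    and derivative_a: "\<And>s. s \<in> I \<Longrightarrow> (a has_vector_derivative a' s) (at s)"
    and derivative_a': "\<And>s. s \<in> I \<Longrightarrow> (a' has_vector_derivative a'' s) (at s)"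
    and continuous_a'': "continuous_on I a''"
    and norm_a: "\<And>s. s \<in> I \<Longrightarrow> norm (a s) = 1"
    and a'_nonzero: "\<And>s. s \<in> I \<Longrightarrow> a' s \<noteq> 0"
begin

definition binormal :: "real \<Rightarrow> real^3" where
  "binormal s = (1 / norm (a' s)) *\<^sub>R cross3 (a s) (a' s)"

definition torsion :: "real \<Rightarrow> real" where
  "torsion s = (cross3 (a s) (a' s) \<bullet> a'' s) / norm (a' s) ^ 2"

lemma constant_if_has_field_derivative_zero:
  assumes "\<And>s. s \<in> I \<Longrightarrow> (g has_field_derivative 0) (at s)"
  shows "\<exists>c. \<forall>s\<in>I. g s = c"
  using has_field_derivative_zero_constant[OF is_interval_convex[OF interval_I]]
    assms has_field_derivative_at_within by blast

lemma inner_a_a: "s \<in> I \<Longrightarrow> a s \<bullet> a s = 1"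
  using norm_a by (simp add: norm_eq_1)

lemma inner_a_a':
  assumes "s \<in> I" shows "a s \<bullet> a' s = 0"
proof -
  have "a s \<bullet> a' s + a' s \<bullet> a s = 0"
    using has_field_derivative_const_on_open_eq_0[OF has_field_derivative_inner[OF
          derivative_a derivative_a] open_I] inner_a_a assms by blast
  then show ?thesis by (simp add: inner_commute)
qed

lemma inner_a_a'':
  assumes "s \<in> I" shows "a s \<bullet> a'' s = - (a' s \<bullet> a' s)"
proof -
  have "a s \<bullet> a'' s + a' s \<bullet> a' s = 0"
    using has_field_derivative_const_on_open_eq_0[OF has_field_derivative_inner[OF
          derivative_a derivative_a'] open_I] inner_a_a' assms by blast
  then show ?thesis by simp
qed

lemma continuous_on_a: "continuous_on I a"
  using derivative_a by (meson continuous_at_imp_continuous_on has_vector_derivative_continuous)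

lemma continuous_on_a': "continuous_on I a'"
  using derivative_a' by (meson continuous_at_imp_continuous_on has_vector_derivative_continuous)

lemma continuous_on_torsion: "continuous_on I torsion"
  unfolding torsion_def[abs_def] using a'_nonzero
  by (intro continuous_on_divide continuous_on_inner continuous_on_cross continuous_on_power
      continuous_on_norm continuous_on_a continuous_on_a' continuous_a'') auto

lemma norm_binormal: "s \<in> I \<Longrightarrow> norm (binormal s) = 1"
  using norm_cross3_unit_orthogonal[OF norm_a inner_a_a'] a'_nonzero by (simp add: binormal_def)

lemma inner_a_binormal: "a s \<bullet> binormal s = 0"
  by (simp add: binormal_def dot_cross_self)

lemma binormal_has_vector_derivative:
  assumes "s \<in> I"
  shows "(binormal has_vector_derivative - (torsion s / norm (a' s)) *\<^sub>R a' s) (at s)"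
proof -
  let ?k = "norm (a' s)"
  have k: "?k > 0" using a'_nonzero assms by simp
  have "((\<lambda>t. norm (a' t)) has_real_derivative (a' s \<bullet> a'' s) / ?k) (at s)"
    using has_real_derivative_norm[OF derivative_a' a'_nonzero, OF assms assms] .
  from DERIV_divide[OF DERIV_const[of 1] this] k
  have "((\<lambda>t. 1 / norm (a' t)) has_real_derivative - (a' s \<bullet> a'' s) / ?k ^ 3) (at s)"
    by (simp add: power3_eq_cube mult.assoc)
  from has_vector_derivative_scaleR[OF this has_vector_derivative_cross3[OF derivative_a derivative_a']]
  have "(binormal has_vector_derivative
      (1 / ?k) *\<^sub>R cross3 (a s) (a'' s) + (- (a' s \<bullet> a'' s) / ?k ^ 3) *\<^sub>R cross3 (a s) (a' s)) (at s)"
    using assms unfolding binormal_def[abs_def] by simp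
  also have "(1 / ?k) *\<^sub>R cross3 (a s) (a'' s) + (- (a' s \<bullet> a'' s) / ?k ^ 3) *\<^sub>R cross3 (a s) (a' s)
      = (1 / ?k ^ 3) *\<^sub>R ((a' s \<bullet> a' s) *\<^sub>R cross3 (a s) (a'' s) - (a' s \<bullet> a'' s) *\<^sub>R cross3 (a s) (a' s))"
    using k by (simp add: scaleR_diff_right power2_norm_eq_inner[symmetric] power3_eq_cube power2_eq_square)
  also have "\<dots> = - (torsion s / ?k) *\<^sub>R a' s"
    using cross3_orthonormal_frame_identity[OF inner_a_a[OF assms] inner_a_a'[OF assms]]
    by (simp add: torsion_def power2_norm_eq_inner[symmetric] power3_eq_cube power2_eq_square)
  finally show ?thesis .
qed

lemma helix_imp_binormal_constant_angle:
  assumes "\<forall>s\<in>I. a s \<bullet> d = c"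
  shows "\<exists>c. \<forall>s\<in>I. binormal s \<bullet> d = c"
proof (rule constant_if_has_field_derivative_zero)
  fix s assume s: "s \<in> I"
  have "a' s \<bullet> d = 0"
    by (rule has_field_derivative_const_on_open_eq_0[OF has_field_derivative_inner_const[OF derivative_a[OF s]] open_I s])
      (use assms in simp)
  then show "((\<lambda>s. binormal s \<bullet> d) has_field_derivative 0) (at s)"
    using has_field_derivative_inner_const[OF binormal_has_vector_derivative[OF s], where l = d] by simp
qed

lemma torsion_mult_inner_a'_eq_0:
  assumes "\<forall>s\<in>I. binormal s \<bullet> l = c" "s \<in> I"
  shows "torsion s * (a' s \<bullet> l) = 0"
proof -
  have "(- (torsion s / norm (a' s)) *\<^sub>R a' s) \<bullet> l = 0"
    by (rule has_field_derivative_const_on_open_eq_0[OF has_field_derivative_inner_const[OF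
          binormal_has_vector_derivative[OF assms(2)]] open_I assms(2)])
      (use assms(1) in simp)
  then show ?thesis
    using a'_nonzero[OF assms(2)] by simp
qed

lemma inner_a_sq_plus_inner_binormal_sq:
  assumes "s \<in> I" "a' s \<bullet> l = 0"
  shows "(a s \<bullet> l)\<^sup>2 + (binormal s \<bullet> l)\<^sup>2 = l \<bullet> l"
proof -
  let ?k = "norm (a' s)"
  have k: "?k > 0" using a'_nonzero assms by simp
  have "?k\<^sup>2 * (l \<bullet> l) = ?k\<^sup>2 * (a s \<bullet> l)\<^sup>2 + (cross3 (a s) (a' s) \<bullet> l)\<^sup>2"
    using arg_cong[OF orthonormal_frame_decomposition[OF inner_a_a inner_a_a', OF assms(1) assms(1), of l],
        of "\<lambda>w. w \<bullet> l"] assms(2)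
    by (simp add: inner_add_left inner_add_right inner_commute power2_norm_eq_inner[symmetric] power2_eq_square)
  then show ?thesis
    using k by (simp add: binormal_def power_divide field_simps)
qed

lemma torsion_mult_inner_binormal:
  assumes "s \<in> I" "a' s \<bullet> l = 0" "a'' s \<bullet> l = 0"
  shows "torsion s * (binormal s \<bullet> l) = norm (a' s) * (a s \<bullet> l)"
proof -
  let ?k = "norm (a' s)" and ?n = "cross3 (a s) (a' s)"
  have k: "?k > 0" using a'_nonzero assms by simp
  have "(?n \<bullet> a'' s) * (?n \<bullet> l) = ?k ^ 4 * (a s \<bullet> l)"
    using arg_cong[OF orthonormal_frame_decomposition[OF inner_a_a inner_a_a', OF assms(1) assms(1), of l],
        of "\<lambda>w. w \<bullet> a'' s"] assms(2,3) inner_a_a''[OF assms(1)]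
    by (simp add: inner_add_left inner_add_right inner_commute power2_norm_eq_inner[symmetric]
        power4_eq_xxxx power2_eq_square) (simp add: algebra_simps)
  moreover have "torsion s * (binormal s \<bullet> l) = (?n \<bullet> a'' s) * (?n \<bullet> l) / ?k ^ 3"
    by (simp add: torsion_def binormal_def power3_eq_cube power2_eq_square)
  ultimately show ?thesis
    using k by (simp add: power3_eq_cube power4_eq_xxxx)
qed

lemma openin_torsion_nonzero: "openin (top_of_set I) {s\<in>I. torsion s \<noteq> 0}"
  using continuous_openin_preimage[OF continuous_on_torsion, of UNIV "- {0}"]
  by (simp add: vimage_def Int_def open_Compl)

lemma torsion_nonzero_eq_frenet_locus:
  assumes l: "norm l = 1" "\<forall>s\<in>I. binormal s \<bullet> l = c" and s1: "s1 \<in> I" "torsion s1 \<noteq> 0"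
  shows "{s\<in>I. torsion s \<noteq> 0} = {s\<in>I. a' s \<bullet> l = 0 \<and> torsion s * c = norm (a' s) * (a s \<bullet> l)}"
    (is "?A = ?T")
proof
  have "open ?A"
    using openin_torsion_nonzero open_I openin_open_trans by blast
  have a'_A: "a' s \<bullet> l = 0" if "s \<in> ?A" for s
    using torsion_mult_inner_a'_eq_0[OF l(2)] that by auto
  show "?A \<subseteq> ?T"
  proof
    fix s assume s: "s \<in> ?A"
    then have sI: "s \<in> I" by simp
    have "a'' s \<bullet> l = 0"
      by (rule has_field_derivative_const_on_open_eq_0[OF has_field_derivative_inner_const[OF
            derivative_a'[OF sI]] \<open>open ?A\<close> s]) (use a'_A in simp)
    then show "s \<in> ?T"
      using torsion_mult_inner_binormal[OF sI a'_A[OF s]] l(2) sI a'_A[OF s] by simp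
  qed
  have pythagoras: "(a s \<bullet> l)\<^sup>2 + c\<^sup>2 = 1" if "s \<in> ?T" for s
    using inner_a_sq_plus_inner_binormal_sq[of s l] that l by (simp add: norm_eq_1)
  have s1_T: "s1 \<in> ?T"
    using s1 \<open>?A \<subseteq> ?T\<close> by blast
  have "a s1 \<bullet> l \<noteq> 0"
  proof
    assume "a s1 \<bullet> l = 0"
    with s1_T s1(2) have "c = 0" by simp
    then show False
      using pythagoras[OF s1_T] \<open>a s1 \<bullet> l = 0\<close> by simp
  qed
  show "?T \<subseteq> ?A"
  proof
    fix s assume s: "s \<in> ?T"
    have "(a s \<bullet> l)\<^sup>2 = (a s1 \<bullet> l)\<^sup>2"
      using pythagoras[OF s] pythagoras[OF s1_T] by simp
    with \<open>a s1 \<bullet> l \<noteq> 0\<close> have "torsion s * c \<noteq> 0"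
      using s a'_nonzero by auto
    then show "s \<in> ?A" using s by simp
  qed
qed

lemma inner_a'_eq_0_if_torsion_nonzero:
  assumes l: "norm l = 1" "\<forall>s\<in>I. binormal s \<bullet> l = c" and s1: "s1 \<in> I" "torsion s1 \<noteq> 0"
  shows "\<forall>s\<in>I. a' s \<bullet> l = 0"
proof -
  let ?A = "{s\<in>I. torsion s \<noteq> 0}"
  have "closedin (top_of_set I) {s\<in>I. (a' s \<bullet> l, torsion s * c - norm (a' s) * (a s \<bullet> l)) = (0, 0)}"
    by (intro continuous_closedin_preimage_constant continuous_on_Pair continuous_on_inner
        continuous_on_diff continuous_on_mult continuous_on_norm continuous_on_const
        continuous_on_a continuous_on_a' continuous_on_torsion)
  then have "closedin (top_of_set I) ?A"
    using torsion_nonzero_eq_frenet_locus[OF assms] by simp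
  then have "?A = {} \<or> ?A = I"
    using connected_clopen[THEN iffD1, rule_format, OF is_interval_connected[OF interval_I]]
      openin_torsion_nonzero by blast
  then have "?A = I"
    using s1 by blast
  then show ?thesis
    using torsion_mult_inner_a'_eq_0[OF l(2)] by auto
qed

lemma helix_iff_binormal_constant_angle:
  "(\<exists>d. norm d = 1 \<and> (\<exists>c. \<forall>s\<in>I. a s \<bullet> d = c)) \<longleftrightarrow>
   (\<exists>l. norm l = 1 \<and> (\<exists>c. \<forall>s\<in>I. binormal s \<bullet> l = c))"
proof
  assume "\<exists>d. norm d = 1 \<and> (\<exists>c. \<forall>s\<in>I. a s \<bullet> d = c)"
  then show "\<exists>l. norm l = 1 \<and> (\<exists>c. \<forall>s\<in>I. binormal s \<bullet> l = c)"
    using helix_imp_binormal_constant_angle by blast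
next
  assume "\<exists>l. norm l = 1 \<and> (\<exists>c. \<forall>s\<in>I. binormal s \<bullet> l = c)"
  then obtain l c where l: "norm l = 1" "\<forall>s\<in>I. binormal s \<bullet> l = c" by blast
  show "\<exists>d. norm d = 1 \<and> (\<exists>c. \<forall>s\<in>I. a s \<bullet> d = c)"
  proof (cases "\<forall>s\<in>I. torsion s = 0")
    case True
    have "(binormal has_vector_derivative 0) (at s within I)" if "s \<in> I" for s
      using binormal_has_vector_derivative[OF that] True that has_vector_derivative_at_within by simp
    then obtain n where n: "\<And>s. s \<in> I \<Longrightarrow> binormal s = n"
      using has_vector_derivative_zero_constant[OF is_interval_convex[OF interval_I]] by blast
    obtain s0 where "s0 \<in> I" using nonempty_I by blast
    then have "norm n = 1" "\<forall>s\<in>I. a s \<bullet> n = 0"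
      using n norm_binormal inner_a_binormal by auto
    then show ?thesis by blast
  next
    case False
    then obtain s1 where "s1 \<in> I" "torsion s1 \<noteq> 0" by blast
    then have "\<forall>s\<in>I. a' s \<bullet> l = 0"
      using inner_a'_eq_0_if_torsion_nonzero l by blast
    then have "((\<lambda>s. a s \<bullet> l) has_field_derivative 0) (at s)" if "s \<in> I" for s
      using has_field_derivative_inner_const[OF derivative_a[OF that], where l = l] that by simp
    then have "\<exists>c. \<forall>s\<in>I. a s \<bullet> l = c"
      by (rule constant_if_has_field_derivative_zero)
    then show ?thesis using l(1) by blast
  qed
qed

end

lemma smooth_on_obtain_derivatives:
  assumes "smooth_on I f" "open I"
  obtains f' f'' where "\<And>s. s \<in> I \<Longrightarrow> (f has_vector_derivative f' s) (at s)"
    and "\<And>s. s \<in> I \<Longrightarrow> (f' has_vector_derivative f'' s) (at s)"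
    and "continuous_on I f''"
proof -
  obtain D where D0: "\<forall>s\<in>I. D 0 s = f s"
    and D: "\<And>n s. s \<in> I \<Longrightarrow> (D n has_vector_derivative D (Suc n) s) (at s)"
    using assms(1) unfolding smooth_on_def by blast
  have "(f has_vector_derivative D 1 s) (at s)" if "s \<in> I" for s
    using has_vector_derivative_transform_within_open[OF D[OF that, of 0] assms(2) that] D0 by simp
  moreover have "(D 1 has_vector_derivative D 2 s) (at s)" if "s \<in> I" for s
    using D[OF that, of 1] by (simp add: numeral_2_eq_2)
  moreover have "continuous_on I (D 2)"
    using D by (meson continuous_at_imp_continuous_on has_vector_derivative_continuous)
  ultimately show ?thesis
    using that by blast
qed

lemma W_n_unit_eq_unit_binormal:
  fixes xi v :: "real \<Rightarrow> real^3" and G K :: "real \<Rightarrow> real"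
  assumes "norm (xi s) = 1" "xi s \<bullet> v s = 0"
  defines "xi' \<equiv> G s *\<^sub>R myller_mu xi v s + K s *\<^sub>R v s"
  shows "W_n_unit xi v G K s = (1 / norm xi') *\<^sub>R cross3 (xi s) xi'"
proof -
  have "cross3 (xi s) (cross3 (v s) (xi s)) = v s"
    using cross3_cross3_same[of "xi s" "v s"] cross_skew[of "v s" "xi s"] assms(1,2)
    by (simp add: norm_eq_1)
  then have W: "W_n xi v G K s = cross3 (xi s) xi'"
    unfolding W_n_def xi'_def myller_mu_def
    by (simp add: cross_add_right cross_mult_right cross_skew[of "xi s" "v s"])
  have "xi s \<bullet> xi' = 0"
    using assms(2) by (simp add: xi'_def inner_add_right myller_mu_def dot_cross_self)
  then show ?thesis
    using W norm_cross3_unit_orthogonal[OF assms(1)] by (simp add: W_n_unit_def)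
qed

theorem corollary14:
  fixes I :: "real set" and r xi v :: "real \<Rightarrow> real^3" and G K T :: "real \<Rightarrow> real"
  assumes "myller_configuration I r xi v G K T"
    and "\<forall>s\<in>I. frenet_K1 xi s > 0"
  shows "xi1_helix I xi \<longleftrightarrow> Wn_helix I xi v G K"
proof -
  note M = assms(1)[unfolded myller_configuration_def]
  obtain xi' xi'' where xi': "\<And>s. s \<in> I \<Longrightarrow> (xi has_vector_derivative xi' s) (at s)"
    and xi'': "\<And>s. s \<in> I \<Longrightarrow> (xi' has_vector_derivative xi'' s) (at s)"
    and "continuous_on I xi''"
    using smooth_on_obtain_derivatives M by metis
  have xi'_eq: "xi' s = G s *\<^sub>R myller_mu xi v s + K s *\<^sub>R v s" if "s \<in> I" for s
    using vector_derivative_unique_at[OF xi'[OF that]] M that by blast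
  interpret regular_spherical_curve I xi xi' xi''
  proof
    show "xi' s \<noteq> 0" if "s \<in> I" for s
      using assms(2) that vector_derivative_at[OF xi'[OF that]] by (auto simp: frenet_K1_def)
  qed (use M xi' xi'' \<open>continuous_on I xi''\<close> in auto)
  have "W_n_unit xi v G K s = binormal s" if "s \<in> I" for s
    using W_n_unit_eq_unit_binormal[of xi s v G K] M that xi'_eq[OF that] by (simp add: binormal_def)
  then show ?thesis
    unfolding xi1_helix_def Wn_helix_def frenet_xi1_def
    using helix_iff_binormal_constant_angle by simp
qed

end
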